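(* In the setting described in the context, the society-wide game has a unique Bayesian equilibrium $x^{soc}$ and the friend game has a unique Bayesian equilibrium $x^{friend}$, given for all $(\theta_i,d_i)\in\Theta\times D$ by $$x^{soc}(\theta_i,d_i)=\frac{\theta_i}{c}+\frac{a\,d_i\,\mathrm{E}[\theta]}{c\,(c-a\,\mathrm{E}[d])},\qquad x^{friend}(\theta_i,d_i)=\frac{\theta_i}{c}+\frac{a\,d_i\,\widetilde{\mathrm{E}}[\theta]}{c\,(c-a\,\widetilde{\mathrm{E}}[d])}.$$
   Context: Fix an integer $n\ge 2$ (number of agents), parameters $a>0$, $c>0$, $\phi\in\mathbb{R}$, and a compact set $\Theta\subset[0,\infty)$ of types. Let $D=\{1,\dots,n-1\}$ (possible degrees). Let $P$ be a probability distribution on $\Theta\times D$, the joint distribution of the type $\theta$ and degree $d$ of a generic potential neighbor, the same for every agent; $\mathrm{E}$ denotes expectation under $P$. The neighbor distribution $\widetilde P$ on $\Theta\times D$ is defined by $\widetilde P(A\times\{d\})=\frac{d}{\mathrm{E}[d]}P(A\times\{d\})$, with expectation $\widetilde{\mathrm{E}}$, so $\widetilde{\mathrm{E}}[h(\theta,d)]=\mathrm{E}[d\,h(\theta,d)]/\mathrm{E}[d]$. Standing assumptions: $P(\theta>0)>0$ and $c>a\,\widetilde{\mathrm{E}}[d]$. A strategy is a bounded measurable function $x:\Theta\times D\to[0,\infty)$, used by all agents. If the others use $x$, an agent of type $\theta_i$ and degree $d_i$ choosing action $y\ge 0$ gets in the society-wide game $EU^{soc}(y;\theta_i,d_i;x)=\theta_i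 y+a\,y\,d_i\,\mathrm{E}[x(\theta,d)]-\frac{c}{2}y^2+\phi(n-1)\mathrm{E}[x(\theta,d)]$, and in the friend game $EU^{friend}(y;\theta_i,d_i;x)=\theta_i y+a\,y\,d_i\,\widetilde{\mathrm{E}}[x(\theta,d)]-\frac{c}{2}y^2+\phi(n-1)\mathrm{E}[x(\theta,d)]$. A Bayesian equilibrium of a game is a strategy $x$ such that for every $(\theta_i,d_i)\in\Theta\times D$, $y=x(\theta_i,d_i)$ maximizes the agent's payoff in that game over $y\ge 0$, given that the others use $x$. *)

theory Defs
  imports "HOL-Probability.Probability"
begin

definition degrees :: "nat \<Rightarrow> nat set" where
  "degrees n = {1..n-1}"

definition type_degree_space :: "real set \<Rightarrow> nat \<Rightarrow> (real \<times> nat) measure" where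
  "type_degree_space \<Theta> n =
     restrict_space (borel \<Otimes>\<^sub>M count_space UNIV) (\<Theta> \<times> degrees n)"

text \<open>Expectation E under P and neighbour expectation E-tilde.\<close>
definition Ex :: "(real \<times> nat) measure \<Rightarrow> (real \<times> nat \<Rightarrow> real) \<Rightarrow> real" where
  "Ex P h = integral\<^sup>L P h"

definition Ext :: "(real \<times> nat) measure \<Rightarrow> (real \<times> nat \<Rightarrow> real) \<Rightarrow> real" where
  "Ext P h = Ex P (\<lambda>t. real (snd t) * h t) / Ex P (\<lambda>t. real (snd t))"

text \<open>Payoffs: y is own action, thi own type, di own degree, x the strategy of the others.\<close>
definition EU_soc :: "nat \<Rightarrow> real \<Rightarrow> real \<Rightarrow> real \<Rightarrow> (real \<times> nat) measure
    \<Rightarrow> real \<Rightarrow> real \<Rightarrow> nat \<Rightarrow> (real \<times> nat \<Rightarrow> real) \<Rightarrow> real" where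
  "EU_soc n a c \<phi> P y thi di x =
     thi * y + a * y * real di * Ex P x - c / 2 * y\<^sup>2 + \<phi> * real (n - 1) * Ex P x"

definition EU_friend :: "nat \<Rightarrow> real \<Rightarrow> real \<Rightarrow> real \<Rightarrow> (real \<times> nat) measure
    \<Rightarrow> real \<Rightarrow> real \<Rightarrow> nat \<Rightarrow> (real \<times> nat \<Rightarrow> real) \<Rightarrow> real" where
  "EU_friend n a c \<phi> P y thi di x =
     thi * y + a * y * real di * Ext P x - c / 2 * y\<^sup>2 + \<phi> * real (n - 1) * Ex P x"

definition is_strategy :: "real set \<Rightarrow> nat \<Rightarrow> (real \<times> nat) measure \<Rightarrow> (real \<times> nat \<Rightarrow> real) \<Rightarrow> bool" where
  "is_strategy \<Theta> n P x \<longleftrightarrow>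
     x \<in> borel_measurable P \<and> bounded (x ` (\<Theta> \<times> degrees n)) \<and>
     (\<forall>t \<in> \<Theta> \<times> degrees n. 0 \<le> x t)"

definition bayes_eq :: "(real \<Rightarrow> real \<Rightarrow> nat \<Rightarrow> (real \<times> nat \<Rightarrow> real) \<Rightarrow> real)
    \<Rightarrow> real set \<Rightarrow> nat \<Rightarrow> (real \<times> nat) measure \<Rightarrow> (real \<times> nat \<Rightarrow> real) \<Rightarrow> bool" where
  "bayes_eq EU \<Theta> n P x \<longleftrightarrow> is_strategy \<Theta> n P x \<and>
     (\<forall>thi \<in> \<Theta>. \<forall>di \<in> degrees n. \<forall>y \<ge> 0. EU y thi di x \<le> EU (x (thi, di)) thi di x)"

end

theory Submission
  imports Defs
begin

text \<open>In both games an agent's payoff is a concave quadratic in her own action whose linear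
  coefficient \<open>\<theta> + a d M\<close> depends on the others only through a single aggregate \<open>M\<close> of their
  strategy (\<open>E[x]\<close>, resp. \<open>\<tilde>E[x]\<close>). The unique best reply is \<open>(\<theta> + a d M) / c\<close>, so every
  equilibrium has this affine form, and applying the (linear) aggregate to it turns the
  equilibrium condition into the scalar equation \<open>c M = A[\<theta>] + a M A[d]\<close>, whose unique solution
  is \<open>A[\<theta>] / (c - a A[d])\<close>. The condition \<open>c > a \<tilde>E[d]\<close> covers the society game as well,
  because \<open>\<tilde>E[d] = E[d\<^sup>2] / E[d] \<ge> E[d]\<close>.\<close>

definition best_reply :: "real \<Rightarrow> real \<Rightarrow> real \<Rightarrow> real \<times> nat \<Rightarrow> real" where
  "best_reply c a M = (\<lambda>(thi, di). (thi + a * real di * M) / c)"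

definition unique_bayes_eq :: "(real \<Rightarrow> real \<Rightarrow> nat \<Rightarrow> (real \<times> nat \<Rightarrow> real) \<Rightarrow> real)
    \<Rightarrow> real set \<Rightarrow> nat \<Rightarrow> (real \<times> nat) measure \<Rightarrow> (real \<times> nat \<Rightarrow> real) \<Rightarrow> bool" where
  "unique_bayes_eq EU \<Theta> n P x\<^sub>0 \<longleftrightarrow> bayes_eq EU \<Theta> n P x\<^sub>0 \<and>
     (\<forall>x. bayes_eq EU \<Theta> n P x \<longrightarrow> (\<forall>thi \<in> \<Theta>. \<forall>di \<in> degrees n. x (thi, di) = x\<^sub>0 (thi, di)))"

lemma quadratic_maximizer_iff:
  fixes K c x :: real
  assumes "0 < c" "0 \<le> K"
  shows "(\<forall>y\<ge>0. K * y - c / 2 * y\<^sup>2 \<le> K * x - c / 2 * x\<^sup>2) \<longleftrightarrow> x = K / c"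
proof
  assume "\<forall>y\<ge>0. K * y - c / 2 * y\<^sup>2 \<le> K * x - c / 2 * x\<^sup>2"
  moreover have "0 \<le> K / c"
    using assms by simp
  ultimately have "K * (K / c) - c / 2 * (K / c)\<^sup>2 \<le> K * x - c / 2 * x\<^sup>2"
    by blast
  then have "(c * x - K)\<^sup>2 \<le> 0"
    using \<open>0 < c\<close> by (simp add: field_simps power2_eq_square)
  then show "x = K / c"
    using \<open>0 < c\<close> by (simp add: field_simps)
next
  assume "x = K / c"
  moreover have "K * y - c / 2 * y\<^sup>2 \<le> K * (K / c) - c / 2 * (K / c)\<^sup>2" for y
    using \<open>0 < c\<close> zero_le_power2[of "c * y - K"] by (simp add: field_simps power2_eq_square)
  ultimately show "\<forall>y\<ge>0. K * y - c / 2 * y\<^sup>2 \<le> K * x - c / 2 * x\<^sup>2"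
    by blast
qed

lemma (in prob_space) expectation_le_size_biased_expectation:
  fixes X :: "'a \<Rightarrow> real"
  assumes "integrable M X" "integrable M (\<lambda>x. X x * X x)" "0 < expectation X"
  shows "expectation X \<le> expectation (\<lambda>x. X x * X x) / expectation X"
proof -
  have "integrable M (\<lambda>x. (X x)\<^sup>2)"
    using assms(2) by (simp add: power2_eq_square)
  then have "(expectation X)\<^sup>2 \<le> expectation (\<lambda>x. (X x)\<^sup>2)"
    using variance_positive[of X] variance_eq[of X] assms(1) by linarith
  then show ?thesis
    using assms(3) by (simp add: field_simps power2_eq_square)
qed

locale type_degree_prior = prob_space P
  for P :: "(real \<times> nat) measure" +
  fixes \<Theta> :: "real set" and n :: nat
  assumes sets_P: "sets P = sets (type_degree_space \<Theta> n)"
    and bounded_types: "bounded \<Theta>"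
    and types_nonneg: "\<Theta> \<subseteq> {0..}"
begin

lemma space_eq: "space P = \<Theta> \<times> degrees n"
  using sets_eq_imp_space_eq[OF sets_P]
  by (simp add: type_degree_space_def space_restrict_space space_pair_measure)

lemma measurable_prior:
  "f \<in> borel_measurable (borel \<Otimes>\<^sub>M count_space UNIV) \<Longrightarrow> f \<in> borel_measurable P"
  using measurable_cong_sets[OF sets_P refl, of borel] measurable_restrict_space1
  by (metis type_degree_space_def)

lemma type_degree_bounds:
  obtains B where "\<And>t. t \<in> space P \<Longrightarrow>
    0 \<le> fst t \<and> fst t \<le> B \<and> 1 \<le> real (snd t) \<and> real (snd t) \<le> real n"
proof -
  obtain B where "\<forall>x\<in>\<Theta>. norm x \<le> B"
    using bounded_types bounded_iff by blast
  then show thesis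
    using that types_nonneg by (force simp: space_eq degrees_def)
qed

lemma integrable_bounded_on_space:
  fixes f :: "real \<times> nat \<Rightarrow> real"
  assumes "f \<in> borel_measurable P" "\<And>t. t \<in> space P \<Longrightarrow> \<bar>f t\<bar> \<le> B"
  shows "integrable P f"
  using assms by (intro integrable_const_bound[where B = B] AE_I2) auto

lemma integrable_type_degree_moments:
  "integrable P fst" "integrable P (\<lambda>t. real (snd t))"
  "integrable P (\<lambda>t. real (snd t) * fst t)" "integrable P (\<lambda>t. real (snd t) * real (snd t))"
proof -
  obtain B where B: "\<And>t. t \<in> space P \<Longrightarrow>
      0 \<le> fst t \<and> fst t \<le> B \<and> 1 \<le> real (snd t) \<and> real (snd t) \<le> real n"
    using type_degree_bounds by blast
  have "\<bar>real (snd t) * fst t\<bar> \<le> real n * B" "\<bar>real (snd t) * real (snd t)\<bar> \<le> real n * real n"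
    if "t \<in> space P" for t
    using B[OF that] by (simp_all add: abs_mult mult_mono)
  then show "integrable P (\<lambda>t. real (snd t) * fst t)" "integrable P (\<lambda>t. real (snd t) * real (snd t))"
    by (auto intro!: integrable_bounded_on_space measurable_prior)
  show "integrable P fst"
    using B by (intro integrable_bounded_on_space[where B = B] measurable_prior) auto
  show "integrable P (\<lambda>t. real (snd t))"
    using B by (intro integrable_bounded_on_space[where B = "real n"] measurable_prior) auto
qed

lemma is_strategy_best_reply:
  assumes "0 < c" "0 \<le> a" "0 \<le> M"
  shows "is_strategy \<Theta> n P (best_reply c a M)"
proof -
  obtain B where B: "\<And>t. t \<in> space P \<Longrightarrow>
      0 \<le> fst t \<and> fst t \<le> B \<and> 1 \<le> real (snd t) \<and> real (snd t) \<le> real n"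
    using type_degree_bounds by blast
  have bound: "0 \<le> best_reply c a M t \<and> best_reply c a M t \<le> (B + a * real n * M) / c"
    if "t \<in> space P" for t
    using B[OF that] assms
    by (auto simp: best_reply_def case_prod_beta intro!: divide_right_mono add_mono mult_right_mono mult_left_mono)
  then have "bounded (best_reply c a M ` space P)"
    unfolding bounded_iff by (intro exI[of _ "(B + a * real n * M) / c"]) auto
  moreover have "best_reply c a M \<in> borel_measurable P"
    unfolding best_reply_def by (intro measurable_prior) measurable
  ultimately show ?thesis
    using bound by (auto simp: is_strategy_def space_eq)
qed

lemma bayes_eq_iff_best_reply:
  assumes "0 < c" "0 \<le> a"
    and payoff: "\<And>y thi di x. EU y thi di x = (thi + a * real di * A x) * y - c / 2 * y\<^sup>2 + C x"
    and A_nonneg: "\<And>x. is_strategy \<Theta> n P x \<Longrightarrow> 0 \<le> A x"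
  shows "bayes_eq EU \<Theta> n P x \<longleftrightarrow>
    is_strategy \<Theta> n P x \<and> (\<forall>t\<in>space P. x t = best_reply c a (A x) t)"
proof (cases "is_strategy \<Theta> n P x")
  case True
  have "(\<forall>y\<ge>0. EU y thi di x \<le> EU (x (thi, di)) thi di x) \<longleftrightarrow> x (thi, di) = best_reply c a (A x) (thi, di)"
    if "thi \<in> \<Theta>" for thi di
  proof -
    have "0 \<le> thi + a * real di * A x"
      using that types_nonneg A_nonneg[OF True] \<open>0 \<le> a\<close> by auto
    then show ?thesis
      using quadratic_maximizer_iff[OF \<open>0 < c\<close>] by (simp add: payoff best_reply_def)
  qed
  then show ?thesis
    by (auto simp: bayes_eq_def space_eq)
qed (simp add: bayes_eq_def)

lemma unique_bayes_eq_linear_aggregate: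
  assumes "0 < c" "0 \<le> a"
    and payoff: "\<And>y thi di x. EU y thi di x = (thi + a * real di * A x) * y - c / 2 * y\<^sup>2 + C x"
    and A_nonneg: "\<And>x. is_strategy \<Theta> n P x \<Longrightarrow> 0 \<le> A x"
    and A_cong: "\<And>x x'. (\<And>t. t \<in> space P \<Longrightarrow> x t = x' t) \<Longrightarrow> A x = A x'"
    and A_best_reply: "\<And>M. A (best_reply c a M) = (A fst + a * M * A (\<lambda>t. real (snd t))) / c"
    and stable: "a * A (\<lambda>t. real (snd t)) < c"
  defines "M\<^sub>0 \<equiv> A fst / (c - a * A (\<lambda>t. real (snd t)))"
  shows "unique_bayes_eq EU \<Theta> n P (best_reply c a M\<^sub>0)"
proof -
  note best_reply_iff =
    bayes_eq_iff_best_reply[where EU = EU and A = A and C = C, OF \<open>0 < c\<close> \<open>0 \<le> a\<close> payoff A_nonneg]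
  have fixed_point_iff: "A (best_reply c a M) = M \<longleftrightarrow> M = M\<^sub>0" for M
  proof -
    have "A (best_reply c a M) = M \<longleftrightarrow> A fst + a * M * A (\<lambda>t. real (snd t)) = c * M"
      using \<open>0 < c\<close> by (simp add: A_best_reply divide_eq_eq mult.commute)
    also have "\<dots> \<longleftrightarrow> M * (c - a * A (\<lambda>t. real (snd t))) = A fst"
      by (simp add: algebra_simps) linarith
    also have "\<dots> \<longleftrightarrow> M = M\<^sub>0"
      using stable by (simp add: M\<^sub>0_def eq_divide_eq)
    finally show ?thesis .
  qed
  have "0 \<le> A (best_reply c a 0)"
    using A_nonneg is_strategy_best_reply \<open>0 < c\<close> \<open>0 \<le> a\<close> by simp
  then have "0 \<le> M\<^sub>0"
    using \<open>0 < c\<close> stable by (simp add: A_best_reply M\<^sub>0_def zero_le_divide_iff)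
  with \<open>0 < c\<close> \<open>0 \<le> a\<close> have "is_strategy \<Theta> n P (best_reply c a M\<^sub>0)"
    by (rule is_strategy_best_reply)
  moreover have "A (best_reply c a M\<^sub>0) = M\<^sub>0"
    using fixed_point_iff by simp
  ultimately have existence: "bayes_eq EU \<Theta> n P (best_reply c a M\<^sub>0)"
    by (simp add: best_reply_iff)
  have uniqueness: "x t = best_reply c a M\<^sub>0 t" if "bayes_eq EU \<Theta> n P x" "t \<in> space P" for x t
  proof -
    have on_space: "\<And>t. t \<in> space P \<Longrightarrow> x t = best_reply c a (A x) t"
      using that(1) by (simp add: best_reply_iff)
    then have "A (best_reply c a (A x)) = A x"
      by (intro A_cong) simp
    then have "A x = M\<^sub>0"
      using fixed_point_iff[of "A x"] by simp
    with on_space \<open>t \<in> space P\<close> show ?thesis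
      by simp
  qed
  show ?thesis
    unfolding unique_bayes_eq_def using existence uniqueness by (simp add: space_eq)
qed

lemma mean_degree_ge_1: "1 \<le> Ex P (\<lambda>t. real (snd t))"
  unfolding Ex_def using integrable_type_degree_moments(2)
  by (intro integral_ge_const AE_I2) (auto simp: space_eq degrees_def)

lemma mean_degree_le_neighbour_mean_degree:
  "Ex P (\<lambda>t. real (snd t)) \<le> Ext P (\<lambda>t. real (snd t))"
proof -
  have "0 < expectation (\<lambda>t. real (snd t))"
    using mean_degree_ge_1 unfolding Ex_def by linarith
  with integrable_type_degree_moments(2,4) show ?thesis
    unfolding Ext_def Ex_def by (rule expectation_le_size_biased_expectation)
qed

lemma Ex_nonneg: "is_strategy \<Theta> n P x \<Longrightarrow> 0 \<le> Ex P x"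
  unfolding Ex_def by (intro integral_nonneg_AE AE_I2) (auto simp: is_strategy_def space_eq)

lemma Ext_nonneg: "is_strategy \<Theta> n P x \<Longrightarrow> 0 \<le> Ext P x"
proof -
  assume "is_strategy \<Theta> n P x"
  then have "0 \<le> Ex P (\<lambda>t. real (snd t) * x t)"
    unfolding Ex_def by (intro integral_nonneg_AE AE_I2) (auto simp: is_strategy_def space_eq)
  with mean_degree_ge_1 show ?thesis
    by (simp add: Ext_def)
qed

lemma Ex_cong: "(\<And>t. t \<in> space P \<Longrightarrow> x t = x' t) \<Longrightarrow> Ex P x = Ex P x'"
  unfolding Ex_def by (rule Bochner_Integration.integral_cong) auto

lemma Ext_cong: "(\<And>t. t \<in> space P \<Longrightarrow> x t = x' t) \<Longrightarrow> Ext P x = Ext P x'"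
  unfolding Ext_def by (simp cong: Ex_cong)

lemma Ex_best_reply:
  "Ex P (best_reply c a M) = (Ex P fst + a * M * Ex P (\<lambda>t. real (snd t))) / c"
proof -
  have "best_reply c a M = (\<lambda>t. (fst t + a * M * real (snd t)) / c)"
    by (auto simp: best_reply_def)
  then show ?thesis
    using integrable_type_degree_moments(1,2) by (simp add: Ex_def)
qed

lemma Ext_best_reply:
  "Ext P (best_reply c a M) = (Ext P fst + a * M * Ext P (\<lambda>t. real (snd t))) / c"
proof -
  have "(\<lambda>t. real (snd t) * best_reply c a M t)
      = (\<lambda>t. (real (snd t) * fst t + a * M * (real (snd t) * real (snd t))) / c)"
    by (auto simp: best_reply_def field_simps)
  then have "Ex P (\<lambda>t. real (snd t) * best_reply c a M t)
      = (Ex P (\<lambda>t. real (snd t) * fst t) + a * M * Ex P (\<lambda>t. real (snd t) * real (snd t))) / c"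
    using integrable_type_degree_moments(3,4) by (simp add: Ex_def)
  then show ?thesis
    by (simp add: Ext_def add_divide_distrib ac_simps)
qed

end

theorem lemma3:
  fixes n :: nat and a c \<phi> :: real and \<Theta> :: "real set" and P :: "(real \<times> nat) measure"
  assumes "n \<ge> 2" and "a > 0" and "c > 0"
    and "compact \<Theta>" and "\<Theta> \<subseteq> {0..}"
    and "prob_space P" and "sets P = sets (type_degree_space \<Theta> n)"
    and "measure P {t \<in> space P. fst t > 0} > 0"
    and "c > a * Ext P (\<lambda>t. real (snd t))"
  shows "bayes_eq (EU_soc n a c \<phi> P) \<Theta> n P
           (\<lambda>(thi, di). thi / c + a * real di * Ex P fst / (c * (c - a * Ex P (\<lambda>t. real (snd t)))))
       \<and> (\<forall>x. bayes_eq (EU_soc n a c \<phi> P) \<Theta> n P x \<longrightarrow>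
             (\<forall>thi \<in> \<Theta>. \<forall>di \<in> degrees n.
                x (thi, di) = thi / c + a * real di * Ex P fst / (c * (c - a * Ex P (\<lambda>t. real (snd t))))))
       \<and> bayes_eq (EU_friend n a c \<phi> P) \<Theta> n P
           (\<lambda>(thi, di). thi / c + a * real di * Ext P fst / (c * (c - a * Ext P (\<lambda>t. real (snd t)))))
       \<and> (\<forall>x. bayes_eq (EU_friend n a c \<phi> P) \<Theta> n P x \<longrightarrow>
             (\<forall>thi \<in> \<Theta>. \<forall>di \<in> degrees n.
                x (thi, di) = thi / c + a * real di * Ext P fst / (c * (c - a * Ext P (\<lambda>t. real (snd t))))))"
proof -
  \<comment> \<open>\<open>n \<ge> 2\<close> and \<open>P(\<theta> > 0) > 0\<close> only rule out degenerate models; the proof does not need them.\<close>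
  interpret type_degree_prior P \<Theta> n
    using assms(4-7) by (simp add: type_degree_prior_def type_degree_prior_axioms_def compact_imp_bounded)
  have soc_payoff: "EU_soc n a c \<phi> P y thi di x
      = (thi + a * real di * Ex P x) * y - c / 2 * y\<^sup>2 + \<phi> * real (n - 1) * Ex P x" for y thi di x
    by (simp add: EU_soc_def algebra_simps)
  have friend_payoff: "EU_friend n a c \<phi> P y thi di x
      = (thi + a * real di * Ext P x) * y - c / 2 * y\<^sup>2 + \<phi> * real (n - 1) * Ex P x" for y thi di x
    by (simp add: EU_friend_def algebra_simps)
  have "a * Ex P (\<lambda>t. real (snd t)) \<le> a * Ext P (\<lambda>t. real (snd t))"
    using mean_degree_le_neighbour_mean_degree assms(2) by simp
  then have soc_stable: "a * Ex P (\<lambda>t. real (snd t)) < c"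
    using assms(9) by linarith
  have soc: "unique_bayes_eq (EU_soc n a c \<phi> P) \<Theta> n P
      (best_reply c a (Ex P fst / (c - a * Ex P (\<lambda>t. real (snd t)))))"
    by (rule unique_bayes_eq_linear_aggregate[where A = "Ex P" and C = "\<lambda>x. \<phi> * real (n - 1) * Ex P x"])
      (auto simp: assms(2,3) less_imp_le soc_payoff Ex_best_reply soc_stable Ex_nonneg intro: Ex_cong)
  have friend: "unique_bayes_eq (EU_friend n a c \<phi> P) \<Theta> n P
      (best_reply c a (Ext P fst / (c - a * Ext P (\<lambda>t. real (snd t)))))"
    by (rule unique_bayes_eq_linear_aggregate[where A = "Ext P" and C = "\<lambda>x. \<phi> * real (n - 1) * Ex P x"])
      (auto simp: assms(2,3,9) less_imp_le friend_payoff Ext_best_reply Ext_nonneg intro: Ext_cong)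
  have closed_form: "best_reply c a (Q / L) = (\<lambda>(thi, di). thi / c + a * real di * Q / (c * L))" for Q L
    by (simp add: best_reply_def add_divide_distrib ac_simps)
  show ?thesis
    using soc friend unfolding unique_bayes_eq_def closed_form prod.case by (elim conjE) (intro conjI)
qed

end
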